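(* For all $n\ge1$, \[ \sum_{\sigma\in\mathcal{C}_{2n+3}} t^{\mathrm{drop}(\sigma)-1}=\sum_{j=0}^{\lfloor n/2\rfloor}\gamma_{n,j}\,t^j(1+t)^{n-2j}, \] where $\gamma_{n,j}$ is the number of primary odd-odd-drop permutations in $\mathcal{C}_{2n+3}$ with $j+1$ drops.
   Context: For $\sigma\in\mathfrak{S}_m$, a drop is a pair $(i,\sigma(i))$ with $i>\sigma(i)$; $\mathrm{drop}(\sigma)$ is the number of drops; a drop is odd-odd if both $i$ and $\sigma(i)$ are odd. $\mathcal{C}_m$ is the set of cyclic permutations of $[m]$ (a single $m$-cycle) all of whose drops are odd-odd. An element $i\in[m]$ is a double drop of $\sigma$ if $\sigma^{-1}(i)>i>\sigma(i)$. A permutation $\sigma\in\mathcal{C}_{2n+3}$ is a primary odd-odd-drop permutation if it has no double drop. *)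

theory Defs
  imports "HOL-Combinatorics.Permutations" "HOL-Computational_Algebra.Polynomial"
begin

definition drops :: "(nat \<Rightarrow> nat) \<Rightarrow> nat \<Rightarrow> nat set" where
  "drops \<sigma> m = {i \<in> {1..m}. \<sigma> i < i}"

definition dropnum :: "(nat \<Rightarrow> nat) \<Rightarrow> nat \<Rightarrow> nat" where
  "dropnum \<sigma> m = card (drops \<sigma> m)"

definition is_cyclic :: "(nat \<Rightarrow> nat) \<Rightarrow> nat \<Rightarrow> bool" where
  "is_cyclic \<sigma> m \<longleftrightarrow> \<sigma> permutes {1..m} \<and>
     (\<forall>i\<in>{1..m}. \<forall>j\<in>{1..m}. \<exists>k. (\<sigma> ^^ k) i = j)"

definition all_drops_odd_odd :: "(nat \<Rightarrow> nat) \<Rightarrow> nat \<Rightarrow> bool" where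
  "all_drops_odd_odd \<sigma> m \<longleftrightarrow> (\<forall>i\<in>drops \<sigma> m. odd i \<and> odd (\<sigma> i))"

definition oddC :: "nat \<Rightarrow> (nat \<Rightarrow> nat) set" where
  "oddC m = {\<sigma>. is_cyclic \<sigma> m \<and> all_drops_odd_odd \<sigma> m}"

definition is_double_drop :: "(nat \<Rightarrow> nat) \<Rightarrow> nat \<Rightarrow> nat \<Rightarrow> bool" where
  "is_double_drop \<sigma> m i \<longleftrightarrow> i \<in> {1..m} \<and> inv \<sigma> i > i \<and> i > \<sigma> i"

definition primary :: "nat \<Rightarrow> (nat \<Rightarrow> nat) \<Rightarrow> bool" where
  "primary n \<sigma> \<longleftrightarrow> \<sigma> \<in> oddC (2*n+3) \<and> \<not> (\<exists>i. is_double_drop \<sigma> (2*n+3) i)"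

definition gamma :: "nat \<Rightarrow> nat \<Rightarrow> nat" where
  "gamma n j = card {\<sigma>. primary n \<sigma> \<and> dropnum \<sigma> (2*n+3) = j + 1}"

end

theory Submission
  imports Defs "HOL-Combinatorics.Cycles" "HOL-Combinatorics.Multiset_Permutations"
begin

(* Reading a cyclic permutation of [m] as the cycle (m w_1 ... w_{m-1}) identifies C_m, for odd m,
   with the words w on [m-1] whose first letter is odd and all of whose descents are odd-odd:
   the drops are m and the descent tops of w, and the double drops are the double descents of the
   cyclic word m w.  Both sides of the theorem thus become sums over such words.  Splitting a word
   at its largest letter M, w = u M v, both t^des(w) and the weight t^des(w) (1+t)^oda(w) of
   primary words (oda counting odd double ascents) factor over u and v, with coefficients that
   depend only on whether u and v are empty; the two factorisations differ only for w = M v and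
   w = u M, and there the discrepancies cancel.  Finally, in a primary word every odd letter is
   exactly one of: the first letter, a descent top, a descent bottom, an odd double ascent.
   As [2n+2] has n+1 odd letters, this gives oda(w) = n - 2 des(w). *)

section \<open>Statistics of words\<close>

fun des :: "nat list \<Rightarrow> nat" where
  "des (a # b # xs) = (if b < a then 1 else 0) + des (b # xs)"
| "des _ = 0"

fun descents_odd_odd :: "nat list \<Rightarrow> bool" where
  "descents_odd_odd (a # b # xs) = ((b < a \<longrightarrow> odd a \<and> odd b) \<and> descents_odd_odd (b # xs))"
| "descents_odd_odd _ = True"

(* In the next two functions p is the letter preceding the word, and the last letter counts as
   followed by a letter larger than all others. *)
fun no_double_descent :: "nat \<Rightarrow> nat list \<Rightarrow> bool" where
  "no_double_descent p (x # y # xs) = (\<not> (y < x \<and> x < p) \<and> no_double_descent x (y # xs))"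
| "no_double_descent p _ = True"

fun odd_double_ascents :: "nat \<Rightarrow> nat list \<Rightarrow> nat" where
  "odd_double_ascents p [] = 0"
| "odd_double_ascents p [x] = (if p < x \<and> odd x then 1 else 0)"
| "odd_double_ascents p (x # y # xs) =
     (if p < x \<and> x < y \<and> odd x then 1 else 0) + odd_double_ascents x (y # xs)"

(* w stands for the cycle (M w) with M larger than all letters of w: the first letter must be odd
   because M \<rightarrow> w_1 is a drop, and it is preceded by a larger letter. *)
definition odd_odd_word :: "nat list \<Rightarrow> bool" where
  "odd_odd_word w \<longleftrightarrow> (w \<noteq> [] \<longrightarrow> odd (hd w)) \<and> descents_odd_odd w"

definition primary_word :: "nat list \<Rightarrow> bool" where
  "primary_word w = (case w of [] \<Rightarrow> True | x # _ \<Rightarrow> no_double_descent (Suc x) w)"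

definition odd_dasc :: "nat list \<Rightarrow> nat" where
  "odd_dasc w = (case w of [] \<Rightarrow> 0 | x # _ \<Rightarrow> odd_double_ascents (Suc x) w)"

lemma des_append_Cons: "des (xs @ y # ys) = des (xs @ [y]) + des (y # ys)"
  by (induction xs rule: des.induct) auto

lemma des_snoc_max: "\<forall>x\<in>set u. x < M \<Longrightarrow> des (u @ [M]) = des u"
  by (induction u rule: des.induct) auto

lemma des_split_max:
  "\<forall>x\<in>set u. x < M \<Longrightarrow> \<forall>x\<in>set v. x < M \<Longrightarrow>
   des (u @ M # v) = des u + des v + (if v = [] then 0 else 1)"
  using des_append_Cons[of u M v] des_snoc_max[of u M] by (cases v) auto

lemma descents_odd_odd_append_Cons:
  "descents_odd_odd (xs @ y # ys) = (descents_odd_odd (xs @ [y]) \<and> descents_odd_odd (y # ys))"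
  by (induction xs rule: descents_odd_odd.induct) auto

lemma descents_odd_odd_snoc_max: "\<forall>x\<in>set u. x < M \<Longrightarrow> descents_odd_odd (u @ [M]) = descents_odd_odd u"
  by (induction u rule: descents_odd_odd.induct) auto

lemma odd_odd_word_split_max:
  "\<forall>x\<in>set u. x < M \<Longrightarrow> \<forall>x\<in>set v. x < M \<Longrightarrow>
   odd_odd_word (u @ M # v) \<longleftrightarrow>
     odd_odd_word u \<and> odd_odd_word v \<and> (u = [] \<longrightarrow> odd M) \<and> (v \<noteq> [] \<longrightarrow> odd M)"
  unfolding odd_odd_word_def
  using descents_odd_odd_append_Cons[of u M v] descents_odd_odd_snoc_max[of u M]
  by (cases u; cases v) auto

lemma no_double_descent_append_Cons:
  "xs \<noteq> [] \<Longrightarrow> no_double_descent p (xs @ y # ys) \<longleftrightarrow>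
     no_double_descent p (xs @ [y]) \<and> no_double_descent (last xs) (y # ys)"
  by (induction p xs rule: no_double_descent.induct) auto

lemma no_double_descent_snoc_max:
  "\<forall>x\<in>set u. x < M \<Longrightarrow> no_double_descent p (u @ [M]) = no_double_descent p u"
  by (induction p u rule: no_double_descent.induct) auto

lemma no_double_descent_Cons_cong:
  "x < p \<Longrightarrow> x < q \<Longrightarrow> no_double_descent p (x # r) = no_double_descent q (x # r)"
  by (cases r) auto

lemma primary_word_split_max:
  assumes u: "\<forall>x\<in>set u. x < M" and v: "\<forall>x\<in>set v. x < M"
  shows "primary_word (u @ M # v) \<longleftrightarrow> primary_word u \<and> primary_word v \<and> (u = [] \<longrightarrow> v = [])"
proof (cases u)
  case Nil
  then show ?thesis using v by (cases v) (auto simp: primary_word_def)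
next
  case (Cons a u')
  have "last u < M" using u Cons by simp
  then have "no_double_descent (last u) (M # v) = primary_word v"
    using v no_double_descent_Cons_cong[of _ M]
    by (cases v) (auto simp: primary_word_def)
  then show ?thesis
    using Cons u no_double_descent_append_Cons[of u "Suc a" M v] no_double_descent_snoc_max[of u M]
    by (simp add: primary_word_def)
qed

lemma odd_double_ascents_append_Cons:
  "xs \<noteq> [] \<Longrightarrow> \<forall>x\<in>set xs. x < M \<Longrightarrow>
   odd_double_ascents p (xs @ M # ys) = odd_double_ascents p xs + odd_double_ascents (last xs) (M # ys)"
  by (induction p xs rule: odd_double_ascents.induct) (auto split: list.split)

lemma odd_double_ascents_Cons_cong:
  "x \<le> p \<Longrightarrow> x \<le> q \<Longrightarrow> odd_double_ascents p (x # r) = odd_double_ascents q (x # r)"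
  by (cases r) auto

lemma odd_dasc_split_max:
  assumes u: "\<forall>x\<in>set u. x < M" and v: "\<forall>x\<in>set v. x < M"
  shows "odd_dasc (u @ M # v) =
    odd_dasc u + odd_dasc v + (if u \<noteq> [] \<and> v = [] \<and> odd M then 1 else 0)"
proof (cases u)
  case Nil
  then show ?thesis using v odd_double_ascents_Cons_cong by (cases v) (auto simp: odd_dasc_def)
next
  case (Cons a u')
  have "last u < M" using u Cons by simp
  then have "odd_double_ascents (last u) (M # v) = odd_dasc v + (if v = [] \<and> odd M then 1 else 0)"
    using v odd_double_ascents_Cons_cong[of _ M]
    by (cases v) (auto simp: odd_dasc_def)
  then show ?thesis
    using Cons u odd_double_ascents_append_Cons[of u M "Suc a" v] by (simp add: odd_dasc_def)
qed

section \<open>The two generating functions agree\<close>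

definition drop_weight :: "nat list \<Rightarrow> int poly" where
  "drop_weight w = (if odd_odd_word w then monom 1 (des w) else 0)"

definition gamma_weight :: "nat list \<Rightarrow> int poly" where
  "gamma_weight w =
     (if odd_odd_word w \<and> primary_word w then monom 1 (des w) * [:1, 1:] ^ odd_dasc w else 0)"

lemma drop_weight_Nil [simp]: "drop_weight [] = 1"
  by (simp add: drop_weight_def odd_odd_word_def)

lemma gamma_weight_Nil [simp]: "gamma_weight [] = 1"
  by (simp add: gamma_weight_def odd_odd_word_def primary_word_def odd_dasc_def)

definition drop_factor :: "nat \<Rightarrow> bool \<Rightarrow> bool \<Rightarrow> int poly" where
  "drop_factor M u_nil v_nil =
     (if v_nil then (if u_nil \<and> even M then 0 else 1) else if odd M then monom 1 1 else 0)"

definition gamma_factor :: "nat \<Rightarrow> bool \<Rightarrow> bool \<Rightarrow> int poly" where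
  "gamma_factor M u_nil v_nil =
     (if v_nil then (if u_nil then (if odd M then 1 else 0) else if odd M then [:1, 1:] else 1)
      else if u_nil \<or> even M then 0 else monom 1 1)"

lemma drop_weight_split_max:
  "\<forall>x\<in>set u. x < M \<Longrightarrow> \<forall>x\<in>set v. x < M \<Longrightarrow>
   drop_weight (u @ M # v) = drop_factor M (u = []) (v = []) * drop_weight u * drop_weight v"
  using odd_odd_word_split_max[of u M v] des_split_max[of u M v]
  by (auto simp: drop_weight_def drop_factor_def mult_monom)

lemma gamma_weight_split_max:
  "\<forall>x\<in>set u. x < M \<Longrightarrow> \<forall>x\<in>set v. x < M \<Longrightarrow>
   gamma_weight (u @ M # v) = gamma_factor M (u = []) (v = []) * gamma_weight u * gamma_weight v"
  using odd_odd_word_split_max[of u M v] des_split_max[of u M v]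
    primary_word_split_max[of u M v] odd_dasc_split_max[of u M v]
  by (auto simp: gamma_weight_def gamma_factor_def mult_monom power_add algebra_simps)

lemma drop_factor_eq_gamma_factor: "drop_factor M a a = gamma_factor M a a"
  by (simp add: drop_factor_def gamma_factor_def)

lemma drop_factor_ends_eq_gamma_factor_ends:
  "drop_factor M True False + drop_factor M False True
   = gamma_factor M True False + gamma_factor M False True"
  by (simp add: drop_factor_def gamma_factor_def monom_Suc one_pCons)

lemma takeWhile_neq_append_Cons_tl_dropWhile:
  assumes "x \<in> set w"
  shows "takeWhile (\<lambda>y. y \<noteq> x) w @ x # tl (dropWhile (\<lambda>y. y \<noteq> x) w) = w"
proof -
  have "dropWhile (\<lambda>y. y \<noteq> x) w = x # tl (dropWhile (\<lambda>y. y \<noteq> x) w)"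
    using assms hd_dropWhile[of "\<lambda>y. y \<noteq> x" w]
    by (metis (mono_tags) dropWhile_eq_Nil_conv list.collapse)
  then show ?thesis by (metis takeWhile_dropWhile_id)
qed

lemma sum_permutations_of_set_split:
  assumes "finite S" and "M \<in> S"
  shows "sum g (permutations_of_set S) =
    (\<Sum>A\<in>Pow (S - {M}). \<Sum>u\<in>permutations_of_set A. \<Sum>v\<in>permutations_of_set (S - {M} - A).
       g (u @ M # v))"
proof -
  let ?S' = "S - {M}"
  let ?before = "takeWhile (\<lambda>x. x \<noteq> M)" and ?after = "\<lambda>w. tl (dropWhile (\<lambda>x. x \<noteq> M) w)"
  note split = takeWhile_neq_append_Cons_tl_dropWhile[of M]
  have "sum g (permutations_of_set S) =
      (\<Sum>(A, u, v) \<in> Sigma (Pow ?S') (\<lambda>A. permutations_of_set A \<times> permutations_of_set (?S' - A)).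
        g (u @ M # v))"
  proof (rule sum.reindex_bij_witness[where i = "\<lambda>(A, u, v). u @ M # v"
        and j = "\<lambda>w. (set (?before w), ?before w, ?after w)"])
    fix w assume "w \<in> permutations_of_set S"
    then have "distinct (?before w @ M # ?after w)" "set (?before w @ M # ?after w) = S"
      using split[of w] \<open>M \<in> S\<close> by (auto simp: permutations_of_set_def)
    then show "(set (?before w), ?before w, ?after w) \<in>
        Sigma (Pow ?S') (\<lambda>A. permutations_of_set A \<times> permutations_of_set (?S' - A))"
      by (auto simp: permutations_of_set_def)
    show "(\<lambda>(A, u, v). u @ M # v) (set (?before w), ?before w, ?after w) = w"
      and "(\<lambda>(A, u, v). g (u @ M # v)) (set (?before w), ?before w, ?after w) = g w"
      using split[of w] \<open>w \<in> permutations_of_set S\<close> \<open>M \<in> S\<close>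
      by (auto simp: permutations_of_set_def)
  next
    fix a assume "a \<in> Sigma (Pow ?S') (\<lambda>A. permutations_of_set A \<times> permutations_of_set (?S' - A))"
    then obtain A u v where a: "a = (A, u, v)" and A: "A \<subseteq> ?S'"
      and u: "u \<in> permutations_of_set A" and v: "v \<in> permutations_of_set (?S' - A)"
      by auto
    have "M \<notin> set u" using A u by (auto simp: permutations_of_set_def)
    then have "?before (u @ M # v) = u" "?after (u @ M # v) = v" by (induction u) auto
    then show "(\<lambda>w. (set (?before w), ?before w, ?after w)) ((\<lambda>(A, u, v). u @ M # v) a) = a"
      using a u by (simp add: permutations_of_set_def)
    show "(\<lambda>(A, u, v). u @ M # v) a \<in> permutations_of_set S"
      using a A u v \<open>M \<in> S\<close> by (auto simp: permutations_of_set_def)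
  qed
  also have "\<dots> = (\<Sum>A\<in>Pow ?S'. \<Sum>(u, v)\<in>permutations_of_set A \<times> permutations_of_set (?S' - A).
      g (u @ M # v))"
    using \<open>finite S\<close> by (intro sum.Sigma[symmetric]) auto
  also have "\<dots> = (\<Sum>A\<in>Pow ?S'. \<Sum>u\<in>permutations_of_set A. \<Sum>v\<in>permutations_of_set (?S' - A).
      g (u @ M # v))"
    by (simp add: sum.cartesian_product)
  finally show ?thesis .
qed

lemma sum_permutations_of_set_factor:
  fixes f :: "'a list \<Rightarrow> 'b::comm_semiring_1"
  assumes "finite S" and "M \<in> S"
    and factor: "\<And>u v. set u \<subseteq> S - {M} \<Longrightarrow> set v \<subseteq> S - {M} \<Longrightarrow>
       f (u @ M # v) = c (u = []) (v = []) * f u * f v"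
  shows "sum f (permutations_of_set S) =
    (\<Sum>A\<in>Pow (S - {M}). c (A = {}) (A = S - {M}) *
       (sum f (permutations_of_set A) * sum f (permutations_of_set (S - {M} - A))))"
proof -
  have "(\<Sum>u\<in>permutations_of_set A. \<Sum>v\<in>permutations_of_set (S - {M} - A). f (u @ M # v)) =
      c (A = {}) (A = S - {M}) * (sum f (permutations_of_set A) * sum f (permutations_of_set (S - {M} - A)))"
    if A: "A \<subseteq> S - {M}" for A
  proof -
    have "(\<Sum>u\<in>permutations_of_set A. \<Sum>v\<in>permutations_of_set (S - {M} - A). f (u @ M # v)) =
        (\<Sum>u\<in>permutations_of_set A. \<Sum>v\<in>permutations_of_set (S - {M} - A).
          c (A = {}) (A = S - {M}) * (f u * f v))"
    proof (intro sum.cong refl)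
      fix u v assume "u \<in> permutations_of_set A" "v \<in> permutations_of_set (S - {M} - A)"
      moreover from this have "(u = []) = (A = {})" "(v = []) = (A = S - {M})"
        using A by (auto simp: permutations_of_set_def)
      ultimately show "f (u @ M # v) = c (A = {}) (A = S - {M}) * (f u * f v)"
        using A factor[of u v] by (auto simp: permutations_of_set_def mult.assoc)
    qed
    then show ?thesis by (simp add: sum_product flip: sum_distrib_left)
  qed
  then show ?thesis
    unfolding sum_permutations_of_set_split[OF assms(1,2), of f] by (intro sum.cong) auto
qed

lemma sum_Pow_drop_factor_eq_gamma_factor:
  assumes "finite T" and "X {} = X T"
  shows "(\<Sum>A\<in>Pow T. drop_factor M (A = {}) (A = T) * X A) =
    (\<Sum>A\<in>Pow T. gamma_factor M (A = {}) (A = T) * X A)"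
proof -
  have "(\<Sum>A\<in>Pow T. drop_factor M (A = {}) (A = T) * X A - gamma_factor M (A = {}) (A = T) * X A) =
      (\<Sum>A\<in>{{}, T}. drop_factor M (A = {}) (A = T) * X A - gamma_factor M (A = {}) (A = T) * X A)"
    using \<open>finite T\<close> drop_factor_eq_gamma_factor by (intro sum.mono_neutral_right) auto
  also have "\<dots> = 0"
    using assms(2) drop_factor_eq_gamma_factor[of M]
      arg_cong[OF drop_factor_ends_eq_gamma_factor_ends[of M], of "(*) (X T)"]
    by (cases "T = {}") (auto simp: algebra_simps)
  finally show ?thesis by (simp add: sum_subtractf)
qed

lemma sum_drop_weight_eq_sum_gamma_weight:
  "finite S \<Longrightarrow> sum drop_weight (permutations_of_set S) = sum gamma_weight (permutations_of_set S)"
proof (induction "card S" arbitrary: S rule: less_induct)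
  case less
  show ?case
  proof (cases "S = {}")
    case True
    then show ?thesis by simp
  next
    case False
    define M where "M = Max S"
    have M: "M \<in> S" "\<And>x. x \<in> S - {M} \<Longrightarrow> x < M"
      using False less.prems by (auto simp: M_def order.not_eq_order_implies_strict)
    define F where "F A = sum gamma_weight (permutations_of_set A)" for A
    have IH: "sum drop_weight (permutations_of_set A) = F A" if "A \<subseteq> S - {M}" for A
      unfolding F_def using that less.prems M(1)
      by (intro less.hyps) (auto intro: psubset_card_mono finite_subset)
    have "sum drop_weight (permutations_of_set S) =
        (\<Sum>A\<in>Pow (S - {M}). drop_factor M (A = {}) (A = S - {M}) * (F A * F (S - {M} - A)))"
      using less.prems M IH by (subst sum_permutations_of_set_factor[where c = "drop_factor M"])
        (auto intro!: drop_weight_split_max sum.cong)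
    also have "\<dots> = (\<Sum>A\<in>Pow (S - {M}). gamma_factor M (A = {}) (A = S - {M}) * (F A * F (S - {M} - A)))"
      using less.prems by (intro sum_Pow_drop_factor_eq_gamma_factor) (auto simp: F_def)
    also have "\<dots> = sum gamma_weight (permutations_of_set S)"
      using less.prems M unfolding F_def
      by (subst sum_permutations_of_set_factor[where c = "gamma_factor M"])
        (auto intro!: gamma_weight_split_max)
    finally show ?thesis .
  qed
qed

section \<open>Odd letters of primary words\<close>

lemma length_filter_odd_primary_word:
  assumes "w \<noteq> []" "distinct w" "odd_odd_word w" "primary_word w"
  shows "length (filter odd w) = odd_dasc w + 2 * des w + 1"
  using assms
proof (induction "length w" arbitrary: w rule: less_induct)
  case less
  define M where "M = Max (set w)"
  have "M \<in> set w" and M_max: "\<forall>x\<in>set w. x \<le> M"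
    using less.prems(1) by (simp_all add: M_def)
  then obtain u v where w: "w = u @ M # v" by (meson split_list)
  then have "M \<notin> set u" "M \<notin> set v" using less.prems(2) by auto
  then have u: "\<forall>x\<in>set u. x < M" and v: "\<forall>x\<in>set v. x < M"
    using M_max w by (auto intro: le_neq_trans)
  have uv: "odd_odd_word u" "odd_odd_word v" "primary_word u" "primary_word v"
    "u = [] \<longrightarrow> v = []" "u = [] \<longrightarrow> odd M" "v \<noteq> [] \<longrightarrow> odd M"
    using less.prems w odd_odd_word_split_max[OF u v] primary_word_split_max[OF u v] by auto
  have "u \<noteq> [] \<Longrightarrow> length (filter odd u) = odd_dasc u + 2 * des u + 1"
    and "v \<noteq> [] \<Longrightarrow> length (filter odd v) = odd_dasc v + 2 * des v + 1"
    using less.hyps[of u] less.hyps[of v] less.prems(2) w uv by auto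
  then show ?case
    using w uv des_split_max[OF u v] odd_dasc_split_max[OF u v]
    by (cases "u = []"; cases "v = []") (auto simp: odd_dasc_def)
qed

lemma card_odd_atLeastAtMost: "card ({x. odd x} \<inter> {1..2 * n + 2 :: nat}) = n + 1"
proof -
  have "{x. odd x} \<inter> {1..2 * n + 2} = (\<lambda>k. 2 * k + 1) ` {..n}"
  proof (intro set_eqI iffI)
    fix x assume "x \<in> {x. odd x} \<inter> {1..2 * n + 2}"
    then have "x = 2 * (x div 2) + 1" "x div 2 \<le> n" by auto presburger+
    then show "x \<in> (\<lambda>k. 2 * k + 1) ` {..n}" by (metis atMost_iff image_eqI)
  qed auto
  moreover have "inj_on (\<lambda>k::nat. 2 * k + 1) {..n}" by (auto simp: inj_on_def)
  ultimately show ?thesis by (simp add: card_image)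
qed

lemma odd_dasc_primary_word:
  assumes "w \<in> permutations_of_set {1..2 * n + 2}" "odd_odd_word w" "primary_word w"
  shows "odd_dasc w + 2 * des w = n"
proof -
  have "length (filter odd w) = n + 1"
    using assms(1) distinct_length_filter[of w odd] card_odd_atLeastAtMost[of n]
    by (auto simp: permutations_of_set_def)
  moreover have "w \<noteq> []" using assms(1) by (auto simp: permutations_of_set_def)
  ultimately show ?thesis using length_filter_odd_primary_word[of w] assms
    by (auto simp: permutations_of_set_def)
qed

section \<open>Cyclic permutations as words\<close>

lemma all_nat_iff_zero_Suc: "(\<forall>k::nat. P k) \<longleftrightarrow> P 0 \<and> (\<forall>k. P (Suc k))"
  by (metis not0_implies_Suc)

lemma Collect_nat_eq_zero_Suc: "{k::nat. P k} = (if P 0 then {0} else {}) \<union> Suc ` {k. P (Suc k)}"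
proof (intro set_eqI iffI)
  fix x assume "x \<in> {k. P k}"
  then show "x \<in> (if P 0 then {0} else {}) \<union> Suc ` {k. P (Suc k)}"
    by (cases x) auto
qed (auto split: if_splits)

lemma no_double_descent_iff_nth:
  "no_double_descent p l \<longleftrightarrow>
     (\<forall>k. Suc k < length l \<longrightarrow> l ! Suc k < l ! k \<longrightarrow> (p # l) ! k \<le> l ! k)"
  by (induction p l rule: no_double_descent.induct) (subst all_nat_iff_zero_Suc, auto)

lemma descents_odd_odd_iff_nth:
  "descents_odd_odd l \<longleftrightarrow>
     (\<forall>k. Suc k < length l \<longrightarrow> l ! Suc k < l ! k \<longrightarrow> odd (l ! k) \<and> odd (l ! Suc k))"
  by (induction l rule: descents_odd_odd.induct) (subst all_nat_iff_zero_Suc, auto)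

lemma des_eq_card_nth: "des l = card {k. Suc k < length l \<and> l ! Suc k < l ! k}"
proof (induction l rule: des.induct)
  case (1 a b xs)
  have "{k. Suc k < length (a # b # xs) \<and> (a # b # xs) ! Suc k < (a # b # xs) ! k} =
      (if b < a then {0} else {}) \<union> Suc ` {k. Suc k < length (b # xs) \<and> (b # xs) ! Suc k < (b # xs) ! k}"
    by (subst Collect_nat_eq_zero_Suc) simp
  then show ?case using 1 by (simp add: card_Un_disjoint card_image)
qed auto

context
  fixes m :: nat and w :: "nat list"
  assumes distinct_word: "distinct w" and set_word: "set w = {1..m-1}" and two_le: "2 \<le> m"
begin

lemma set_max_Cons_word: "set (m # w) = {1..m}"
  using set_word two_le by auto

lemma length_word: "length w = m - 1"
  using distinct_card[OF distinct_word] set_word by simp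

lemma length_max_Cons_word: "length (m # w) = m"
  using length_word two_le by simp

lemma word_not_Nil: "w \<noteq> []"
  using length_word two_le by auto

lemma word_nth_less: "j < length w \<Longrightarrow> w ! j < m"
  using set_word nth_mem[of j w] two_le by fastforce

lemma atLeastAtMost_iff_word_nth: "x \<in> {1..m} \<longleftrightarrow> x = m \<or> (\<exists>j<length w. x = w ! j)"
  unfolding set_max_Cons_word[symmetric] by (auto simp: in_set_conv_nth)

lemma word_nth_mem: "j < length w \<Longrightarrow> w ! j \<in> {1..m}"
  using atLeastAtMost_iff_word_nth by blast

lemma funpow_cycle_of_list_nth:
  assumes "i < m"
  shows "(cycle_of_list (m # w) ^^ k) ((m # w) ! i) = (m # w) ! ((k + i) mod m)"
proof -
  have "distinct (m # w)" using distinct_word set_word by auto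
  then have "map (cycle_of_list (m # w) ^^ k) (m # w) = rotate k (m # w)"
    by (rule cyclic_rotation)
  then show ?thesis
    using assms length_max_Cons_word nth_rotate[of i "m # w" k] by (metis length_map nth_map)
qed

lemma cycle_of_list_max: "cycle_of_list (m # w) m = w ! 0"
  using funpow_cycle_of_list_nth[of 0 1] two_le by simp

lemma cycle_of_list_word_nth:
  assumes "j < length w"
  shows "cycle_of_list (m # w) (w ! j) = (if Suc j < length w then w ! Suc j else m)"
proof -
  have "Suc (Suc j) mod m = (if Suc j < length w then Suc (Suc j) else 0)"
    using assms length_word two_le by (cases "Suc (Suc j) = m") auto
  then show ?thesis
    using funpow_cycle_of_list_nth[of "Suc j" 1] assms length_word by auto
qed

lemma word_nth_eq_funpow: "j < length w \<Longrightarrow> w ! j = (cycle_of_list (m # w) ^^ Suc j) m"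
  using funpow_cycle_of_list_nth[of 0 "Suc j"] length_word by simp

lemma cycle_of_list_permutes: "cycle_of_list (m # w) permutes {1..m}"
  using cycle_permutes[of "m # w"] set_max_Cons_word by simp

lemma inv_cycle_of_list_word_nth:
  assumes "j < length w"
  shows "inv (cycle_of_list (m # w)) (w ! j) = (m # w) ! j"
proof -
  have "cycle_of_list (m # w) ((m # w) ! j) = w ! j"
    using assms cycle_of_list_max cycle_of_list_word_nth[of "j - 1"] by (cases j) auto
  then show ?thesis using permutes_inverses(2)[OF cycle_of_list_permutes] by metis
qed

lemma inv_cycle_of_list_max: "inv (cycle_of_list (m # w)) m = last w"
proof -
  have "cycle_of_list (m # w) (last w) = m"
    using cycle_of_list_word_nth[of "length w - 1"] word_not_Nil by (simp add: last_conv_nth)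
  then show ?thesis using permutes_inverses(2)[OF cycle_of_list_permutes] by metis
qed

lemma is_cyclic_cycle_of_list: "is_cyclic (cycle_of_list (m # w)) m"
  unfolding is_cyclic_def
proof (intro conjI cycle_of_list_permutes ballI)
  fix i j assume "i \<in> {1..m}" "j \<in> {1..m}"
  then obtain a b where ab: "a < m" "i = (m # w) ! a" "b < m" "j = (m # w) ! b"
    using set_max_Cons_word length_max_Cons_word by (metis in_set_conv_nth)
  then have "(cycle_of_list (m # w) ^^ (b + m - a)) i = j"
    using funpow_cycle_of_list_nth[of a "b + m - a"] by simp
  then show "\<exists>k. (cycle_of_list (m # w) ^^ k) i = j" by blast
qed

lemma drops_cycle_of_list:
  "drops (cycle_of_list (m # w)) m = insert m (nth w ` {j. Suc j < length w \<and> w ! Suc j < w ! j})"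
proof (intro set_eqI iffI)
  fix x assume "x \<in> drops (cycle_of_list (m # w)) m"
  then have x: "x \<in> {1..m}" "cycle_of_list (m # w) x < x" by (auto simp: drops_def)
  from x(1) consider "x = m" | j where "j < length w" "x = w ! j"
    using atLeastAtMost_iff_word_nth by blast
  then show "x \<in> insert m (nth w ` {j. Suc j < length w \<and> w ! Suc j < w ! j})"
  proof cases
    case 2
    then show ?thesis
      using x(2) cycle_of_list_word_nth[of j] word_nth_less[of j] by (cases "Suc j < length w") auto
  qed simp
next
  fix x assume "x \<in> insert m (nth w ` {j. Suc j < length w \<and> w ! Suc j < w ! j})"
  then consider "x = m" | j where "Suc j < length w" "w ! Suc j < w ! j" "x = w ! j" by blast
  then show "x \<in> drops (cycle_of_list (m # w)) m"
  proof cases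
    case 1
    then show ?thesis
      using cycle_of_list_max word_nth_less[of 0] word_not_Nil two_le by (auto simp: drops_def)
  next
    case 2
    then show ?thesis using cycle_of_list_word_nth[of j] word_nth_mem[of j] by (auto simp: drops_def)
  qed
qed

lemma dropnum_cycle_of_list: "dropnum (cycle_of_list (m # w)) m = Suc (des w)"
proof -
  let ?D = "{j. Suc j < length w \<and> w ! Suc j < w ! j}"
  have "m \<notin> nth w ` ?D"
    using word_nth_less by (metis (no_types, lifting) Suc_lessD imageE mem_Collect_eq less_irrefl)
  moreover have "inj_on (nth w) ?D" using inj_on_nth[OF distinct_word] by auto
  moreover have "finite ?D" by (rule finite_subset[of _ "{..<length w}"]) auto
  ultimately show ?thesis
    by (simp add: dropnum_def drops_cycle_of_list des_eq_card_nth card_image)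
qed

lemma all_drops_odd_odd_cycle_of_list_iff:
  "odd m \<Longrightarrow> all_drops_odd_odd (cycle_of_list (m # w)) m \<longleftrightarrow> odd_odd_word w"
  unfolding all_drops_odd_odd_def drops_cycle_of_list odd_odd_word_def descents_odd_odd_iff_nth
  using cycle_of_list_max cycle_of_list_word_nth word_not_Nil by (auto simp: hd_conv_nth)

lemma not_primary_word_iff_nth:
  "\<not> primary_word w \<longleftrightarrow> (\<exists>k. Suc k < length w \<and> w ! Suc k < w ! k \<and> w ! k < (m # w) ! k)"
proof -
  obtain x xs where w: "w = x # xs" using word_not_Nil by (cases w) auto
  have "(Suc x # w) ! k > w ! k \<longleftrightarrow> (m # w) ! k > w ! k" if "k < length w" for k
    using that word_nth_less[of 0] w by (cases k) auto
  moreover have "primary_word w \<longleftrightarrow> no_double_descent (Suc x) w"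
    by (simp add: primary_word_def w)
  ultimately show ?thesis
    unfolding no_double_descent_iff_nth by (meson Suc_lessD not_le)
qed

lemma double_drop_cycle_of_list_iff:
  "(\<exists>i. is_double_drop (cycle_of_list (m # w)) m i) \<longleftrightarrow> \<not> primary_word w"
  unfolding not_primary_word_iff_nth
proof
  let ?\<sigma> = "cycle_of_list (m # w)"
  assume "\<exists>i. is_double_drop ?\<sigma> m i"
  then obtain i where i: "i \<in> {1..m}" "inv ?\<sigma> i > i" "i > ?\<sigma> i"
    by (auto simp: is_double_drop_def)
  from i(1) consider "i = m" | j where "j < length w" "i = w ! j"
    using atLeastAtMost_iff_word_nth by blast
  then show "\<exists>k. Suc k < length w \<and> w ! Suc k < w ! k \<and> w ! k < (m # w) ! k"
  proof cases
    case 1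
    then show ?thesis
      using i(2) inv_cycle_of_list_max word_nth_less[of "length w - 1"] word_not_Nil
      by (simp add: last_conv_nth)
  next
    case 2
    then show ?thesis
      using i(2,3) inv_cycle_of_list_word_nth[of j] cycle_of_list_word_nth[of j] word_nth_less[of j]
      by (cases "Suc j < length w") auto
  qed
next
  assume "\<exists>k. Suc k < length w \<and> w ! Suc k < w ! k \<and> w ! k < (m # w) ! k"
  then obtain k where "Suc k < length w" "w ! Suc k < w ! k" "w ! k < (m # w) ! k" by blast
  then have "is_double_drop (cycle_of_list (m # w)) m (w ! k)"
    unfolding is_double_drop_def
    using inv_cycle_of_list_word_nth[of k] cycle_of_list_word_nth[of k] word_nth_mem[of k]
    by auto
  then show "\<exists>i. is_double_drop (cycle_of_list (m # w)) m i" by blast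
qed

end

lemma is_cyclic_obtains_word:
  assumes cyclic: "is_cyclic \<sigma> m" and "2 \<le> m"
  obtains w where "w \<in> permutations_of_set {1..m-1}" "\<sigma> = cycle_of_list (m # w)"
proof -
  have perm: "\<sigma> permutes {1..m}" using cyclic by (simp add: is_cyclic_def)
  then have "permutation \<sigma>" by (auto simp: permutation_permutes)
  have m: "m \<in> {1..m}" using \<open>2 \<le> m\<close> by simp
  have "range (\<lambda>i. (\<sigma> ^^ i) m) = {1..m}"
  proof
    show "range (\<lambda>i. (\<sigma> ^^ i) m) \<subseteq> {1..m}"
      using permutes_in_image[OF permutes_funpow[OF perm]] m by auto
    show "{1..m} \<subseteq> range (\<lambda>i. (\<sigma> ^^ i) m)"
      using cyclic m unfolding is_cyclic_def by (metis rangeI subsetI)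
  qed
  then have set_support: "set (support \<sigma> m) = {1..m}"
    using support_set[OF \<open>permutation \<sigma>\<close>] by simp
  define w where "w = map (\<lambda>i. (\<sigma> ^^ i) m) [1..<least_power \<sigma> m]"
  have support: "support \<sigma> m = m # w"
    using least_power_of_permutation(2)[OF \<open>permutation \<sigma>\<close>] unfolding w_def
    by (simp add: upt_conv_Cons)
  then have "distinct (m # w)"
    using cycle_of_permutation[OF \<open>permutation \<sigma>\<close>, of m] by simp
  moreover have set_max_Cons: "set (m # w) = {1..m}"
    using set_support support by metis
  ultimately have "distinct w" "set w = {1..m} - {m}" by auto
  moreover have "{1..m} - {m} = {1..m-1}" by auto
  ultimately have "w \<in> permutations_of_set {1..m-1}" by (simp add: permutations_of_set_def)
  moreover have "\<sigma> x = cycle_of_list (m # w) x" for x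
  proof (cases "x \<in> {1..m}")
    case True
    then show ?thesis
      by (metis cycle_restrict[OF \<open>permutation \<sigma>\<close>] set_support support)
  next
    case False
    then have "x \<notin> set (m # w)" using set_max_Cons by blast
    then show ?thesis using permutes_not_in[OF perm False] id_outside_supp by metis
  qed
  ultimately show ?thesis using that by blast
qed

lemma bij_betw_cycle_of_list:
  assumes "2 \<le> m"
  shows "bij_betw (\<lambda>w. cycle_of_list (m # w)) (permutations_of_set {1..m-1}) {\<sigma>. is_cyclic \<sigma> m}"
proof (rule bij_betw_imageI)
  show "inj_on (\<lambda>w. cycle_of_list (m # w)) (permutations_of_set {1..m-1})"
  proof (rule inj_onI, rule nth_equalityI)
    fix w w' assume w: "w \<in> permutations_of_set {1..m-1}" and w': "w' \<in> permutations_of_set {1..m-1}"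
      and eq: "cycle_of_list (m # w) = cycle_of_list (m # w')"
    show "length w = length w'"
      using length_word[of w m] length_word[of w' m] w w' assms by (auto simp: permutations_of_set_def)
    then show "w ! j = w' ! j" if "j < length w" for j
      using that word_nth_eq_funpow[of w m j] word_nth_eq_funpow[of w' m j] w w' assms eq
      by (auto simp: permutations_of_set_def)
  qed
  show "(\<lambda>w. cycle_of_list (m # w)) ` permutations_of_set {1..m-1} = {\<sigma>. is_cyclic \<sigma> m}"
  proof (intro set_eqI iffI)
    fix \<sigma> assume "\<sigma> \<in> (\<lambda>w. cycle_of_list (m # w)) ` permutations_of_set {1..m-1}"
    then show "\<sigma> \<in> {\<sigma>. is_cyclic \<sigma> m}"
      using is_cyclic_cycle_of_list assms by (auto simp: permutations_of_set_def)
  next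
    fix \<sigma> assume "\<sigma> \<in> {\<sigma>. is_cyclic \<sigma> m}"
    then show "\<sigma> \<in> (\<lambda>w. cycle_of_list (m # w)) ` permutations_of_set {1..m-1}"
      using is_cyclic_obtains_word[of \<sigma> m] assms by blast
  qed
qed

lemma sum_oddC_eq_sum_drop_weight:
  assumes "odd m" and "2 \<le> m"
  shows "(\<Sum>\<sigma>\<in>oddC m. monom (1::int) (dropnum \<sigma> m - 1)) = sum drop_weight (permutations_of_set {1..m-1})"
proof -
  let ?W = "{w \<in> permutations_of_set {1..m-1}. odd_odd_word w}"
  have "oddC m = {\<sigma> \<in> {\<sigma>. is_cyclic \<sigma> m}. all_drops_odd_odd \<sigma> m}"
    by (simp add: oddC_def)
  then have "bij_betw (\<lambda>w. cycle_of_list (m # w)) ?W (oddC m)"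
    using bij_betw_cycle_of_list all_drops_odd_odd_cycle_of_list_iff assms
    by (simp only:) (intro bij_betw_Collect, auto simp: permutations_of_set_def)
  then have "(\<Sum>\<sigma>\<in>oddC m. monom (1::int) (dropnum \<sigma> m - 1)) =
      (\<Sum>w\<in>?W. monom 1 (dropnum (cycle_of_list (m # w)) m - 1))"
    by (rule sum.reindex_bij_betw[symmetric])
  also have "\<dots> = (\<Sum>w\<in>?W. monom 1 (des w))"
    using dropnum_cycle_of_list assms(2) by (intro sum.cong) (auto simp: permutations_of_set_def)
  finally show ?thesis by (simp add: drop_weight_def sum.inter_filter)
qed

lemma gamma_eq_card_primary_words:
  "gamma n j = card {w \<in> permutations_of_set {1..2*n+2}. odd_odd_word w \<and> primary_word w \<and> des w = j}"
proof -
  have "bij_betw (\<lambda>w. cycle_of_list ((2*n+3) # w))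
      {w \<in> permutations_of_set {1..2*n+2}. odd_odd_word w \<and> primary_word w \<and> des w = j}
      {\<sigma> \<in> {\<sigma>. is_cyclic \<sigma> (2*n+3)}. primary n \<sigma> \<and> dropnum \<sigma> (2*n+3) = j + 1}"
    using bij_betw_cycle_of_list[of "2*n+3"] is_cyclic_cycle_of_list[of _ "2*n+3"]
      all_drops_odd_odd_cycle_of_list_iff[of _ "2*n+3"]
      double_drop_cycle_of_list_iff[of _ "2*n+3"] dropnum_cycle_of_list[of _ "2*n+3"]
    by (intro bij_betw_Collect) (auto simp: permutations_of_set_def primary_def oddC_def)
  moreover have "{\<sigma> \<in> {\<sigma>. is_cyclic \<sigma> (2*n+3)}. primary n \<sigma> \<and> dropnum \<sigma> (2*n+3) = j + 1} =
      {\<sigma>. primary n \<sigma> \<and> dropnum \<sigma> (2*n+3) = j + 1}"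
    by (auto simp: primary_def oddC_def)
  ultimately show ?thesis by (simp add: gamma_def bij_betw_same_card)
qed

lemma sum_gamma_weight_eq_gamma_expansion:
  "sum gamma_weight (permutations_of_set {1..2*n+2}) =
    (\<Sum>j=0..n div 2. smult (int (gamma n j)) (monom 1 j * [:1, 1:] ^ (n - 2*j)))"
proof -
  let ?P = "{w \<in> permutations_of_set {1..2*n+2}. odd_odd_word w \<and> primary_word w}"
  let ?g = "\<lambda>j. monom (1::int) j * [:1, 1:] ^ (n - 2*j)"
  have P: "odd_dasc w = n - 2 * des w" "des w \<le> n div 2" if "w \<in> ?P" for w
    using odd_dasc_primary_word[of w n] that by auto
  have "sum gamma_weight (permutations_of_set {1..2*n+2}) = (\<Sum>w\<in>?P. ?g (des w))"
    using P by (auto simp: gamma_weight_def sum.inter_filter[symmetric] intro!: sum.cong)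
  also have "\<dots> = (\<Sum>j=0..n div 2. \<Sum>w\<in>{w \<in> ?P. des w = j}. ?g (des w))"
    using P by (intro sum.group[symmetric]) auto
  also have "\<dots> = (\<Sum>j=0..n div 2. smult (int (gamma n j)) (?g j))"
    by (simp add: gamma_eq_card_primary_words of_nat_poly conj_assoc)
  finally show ?thesis .
qed

theorem mainTheorem11:
  fixes n :: nat
  assumes "n \<ge> 1"
  shows "(\<Sum>\<sigma>\<in>oddC (2*n+3). monom (1::int) (dropnum \<sigma> (2*n+3) - 1))
       = (\<Sum>j=0..n div 2. smult (int (gamma n j)) (monom 1 j * [:1, 1:] ^ (n - 2*j)))"
proof -
  have "(\<Sum>\<sigma>\<in>oddC (2*n+3). monom (1::int) (dropnum \<sigma> (2*n+3) - 1))
      = sum drop_weight (permutations_of_set {1..2*n+2})"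
    using sum_oddC_eq_sum_drop_weight[of "2*n+3"] by simp
  also have "\<dots> = sum gamma_weight (permutations_of_set {1..2*n+2})"
    by (simp add: sum_drop_weight_eq_sum_gamma_weight)
  also have "\<dots> = (\<Sum>j=0..n div 2. smult (int (gamma n j)) (monom 1 j * [:1, 1:] ^ (n - 2*j)))"
    by (rule sum_gamma_weight_eq_gamma_expansion)
  finally show ?thesis .
qed

end
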